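(* Let $\mu:\mathbb{R}^{n\times n}\to\mathbb{R}$ be the matrix measure induced by a vector norm $|\cdot|$ on $\mathbb{R}^n$. The following four conditions are equivalent: (1) the norm $|\cdot|$ inducing $\mu$ is orthant-monotonic; (2) $\mu$ is admissible, i.e. $\mu(-D)\le 0$ for every $D\in\mathbb{D}^n_{\ge 0}$; (3) $\mu(D)=\max_i\{d_{ii}\}$ for every $D\in\mathbb{D}^n_{\ge 0}$; (4) there exists a matrix $A\in\mathbb{R}^{n\times n}$ such that $\mu(A-D)<0$ for all $D\in\mathbb{D}^n_{\ge 0}$.
   Context: $\mathbb{D}^n_{\ge 0}$ denotes the set of $n\times n$ diagonal matrices with nonnegative diagonal entries $d_{ii}$. For a vector norm $|\cdot|$ on $\mathbb{R}^n$, the induced matrix norm is $\|A\|=\max_{|x|=1}|Ax|$ and the induced matrix measure (logarithmic norm) is $\mu(A)=\lim_{\varepsilon\to0^+}(\|I_n+\varepsilon A\|-1)/\varepsilon$. A norm $|\cdot|$ on $\mathbb{R}^n$ is orthant-monotonic if for all $x,y\in\mathbb{R}^n$: whenever $x_iy_i\ge 0$ and $|x_i|\le|y_i|$ (absolute values) for all $i$, then $|x|\le|y|$. *)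

theory Defs
  imports "HOL-Analysis.Analysis"
begin

definition is_vnorm :: "(real^'n \<Rightarrow> real) \<Rightarrow> bool" where
  "is_vnorm N \<longleftrightarrow>
     (\<forall>x. N x = 0 \<longleftrightarrow> x = 0) \<and>
     (\<forall>c x. N (c *\<^sub>R x) = \<bar>c\<bar> * N x) \<and>
     (\<forall>x y. N (x + y) \<le> N x + N y)"

definition induced_norm :: "(real^'n \<Rightarrow> real) \<Rightarrow> real^'n^'n \<Rightarrow> real" where
  "induced_norm N A = Sup {N (A *v x) | x. N x = 1}"

definition matrix_measure :: "(real^'n \<Rightarrow> real) \<Rightarrow> real^'n^'n \<Rightarrow> real" where
  "matrix_measure N A =
     Lim (at_right 0) (\<lambda>\<epsilon>. (induced_norm N (mat 1 + \<epsilon> *\<^sub>R A) - 1) / \<epsilon>)"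

definition orthant_monotonic :: "(real^'n \<Rightarrow> real) \<Rightarrow> bool" where
  "orthant_monotonic N \<longleftrightarrow>
     (\<forall>x y. (\<forall>i. x $ i * y $ i \<ge> 0 \<and> \<bar>x $ i\<bar> \<le> \<bar>y $ i\<bar>) \<longrightarrow> N x \<le> N y)"

definition diagm :: "('n \<Rightarrow> real) \<Rightarrow> real^'n^'n" where
  "diagm d = (\<chi> i j. if i = j then d i else 0)"

end

theory Submission
  imports Defs
begin

text \<open>
  For an orthant-monotonic norm the induced norm of a nonnegative diagonal matrix D is its largest
  entry, so every difference quotient (||I + e D|| - 1) / e defining \<mu>(D) equals max d_i; this is (3).
  From (3), \<mu>(-D) = \<mu>(M I - D) - M \<le> 0 with M = max d_i, which is (2). Conditions (2) and (4)
  are equivalent by the shift rule \<mu>(A + c I) = \<mu>(A) + c (take A = -I), and by subadditivity and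
  positive homogeneity of \<mu> (scale D up).

  The substantial step is (2) \<Longrightarrow> (1). It suffices that multiplying the k-th coordinate by
  s \<in> [0, 1], x \<mapsto> C_s x, never increases the norm. The function f(s) = |C_s x| is convex, and
  with E_k = diag(e_k) the matrix I - e E_k maps C_s x to C_(s(1-e)) x, so \<mu>(-E_k) \<le> 0 bounds
  the growth of f when s decreases by a factor 1 - e. Comparing with the chord of f through s(1-e) and 1 forces f(s) \<le> f(1).
\<close>

section \<open>Diagonal matrices\<close>

lemma diagm_mult_vec: "diagm d *v x = (\<chi> i. d i * x $ i)"
  by (simp add: vec_eq_iff matrix_vector_mult_def diagm_def if_distrib [of "\<lambda>a. a * _"] cong: if_cong)

lemma mat_1_eq_diagm: "mat 1 = diagm (\<lambda>_. 1)"
  by (simp add: vec_eq_iff mat_def diagm_def)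

lemma diagm_add: "diagm a + diagm b = diagm (\<lambda>i. a i + b i)"
  by (simp add: vec_eq_iff diagm_def)

lemma scaleR_diagm: "c *\<^sub>R diagm a = diagm (\<lambda>i. c * a i)"
  by (simp add: vec_eq_iff diagm_def)

lemma uminus_diagm: "- diagm a = diagm (\<lambda>i. - a i)"
  by (simp add: vec_eq_iff diagm_def)

lemma mat_1_plus_scaleR_diagm: "mat 1 + e *\<^sub>R diagm d = diagm (\<lambda>i. 1 + e * d i)"
  by (simp add: mat_1_eq_diagm scaleR_diagm diagm_add)

definition coord_scaling :: "'n \<Rightarrow> real \<Rightarrow> real^'n^'n" where
  "coord_scaling k s = diagm (\<lambda>i. if i = k then s else 1)"

lemma coord_scaling_mult_vec: "coord_scaling k s *v x = x + ((s - 1) * x $ k) *\<^sub>R axis k 1"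
  by (simp add: coord_scaling_def diagm_mult_vec vec_eq_iff axis_def algebra_simps)

lemma coord_scaling_1 [simp]: "coord_scaling k 1 = mat 1"
  by (simp add: coord_scaling_def mat_1_eq_diagm)

lemma coord_scaling_mult_vec_mult_vec:
  "coord_scaling k a *v (coord_scaling k b *v x) = coord_scaling k (a * b) *v x"
  by (simp add: coord_scaling_def diagm_mult_vec vec_eq_iff)

lemma coord_scaling_convex:
  "(1 - p) *\<^sub>R (coord_scaling k s *v x) = (1 - s) *\<^sub>R (coord_scaling k p *v x) + (s - p) *\<^sub>R x"
  by (simp add: coord_scaling_def diagm_mult_vec vec_eq_iff algebra_simps)

lemma mat_1_minus_scaleR_coord_diagm:
  "mat 1 + e *\<^sub>R - diagm (\<lambda>i. of_bool (i = k)) = coord_scaling k (1 - e)"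
  unfolding coord_scaling_def uminus_diagm mat_1_plus_scaleR_diagm
  by (intro arg_cong [where f = diagm]) auto

section \<open>Norms on real^'n and their induced matrix norms\<close>

locale vector_norm =
  fixes N :: "real^'n \<Rightarrow> real"
  assumes is_vnorm: "is_vnorm N"
begin

lemma N_eq_0_iff [simp]: "N x = 0 \<longleftrightarrow> x = 0"
  using is_vnorm unfolding is_vnorm_def by blast

lemma N_scaleR [simp]: "N (c *\<^sub>R x) = \<bar>c\<bar> * N x"
  using is_vnorm unfolding is_vnorm_def by blast

lemma N_triangle: "N (x + y) \<le> N x + N y"
  using is_vnorm unfolding is_vnorm_def by blast

lemma N_0 [simp]: "N 0 = 0"
  using N_eq_0_iff by blast

lemma N_minus [simp]: "N (- x) = N x"
  using N_scaleR [of "-1" x] by simp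

lemma N_nonneg [simp]: "0 \<le> N x"
  using N_triangle [of x "- x"] by simp

lemma N_pos: "x \<noteq> 0 \<Longrightarrow> 0 < N x"
  using N_nonneg [of x] by (simp add: order_le_less)

lemma N_triangle_diff: "N x - N y \<le> N (x - y)"
  using N_triangle [of "x - y" y] by simp

lemma N_sum: "N (\<Sum>i\<in>S. f i) \<le> (\<Sum>i\<in>S. N (f i))"
proof (induction S rule: infinite_finite_induct)
  case (insert a S)
  then show ?case
    using N_triangle [of "f a" "sum f S"] by simp
qed simp_all

lemma N_le_norm: "\<exists>B\<ge>0. \<forall>x. N x \<le> B * norm x"
proof (intro exI conjI allI)
  fix x :: "real^'n"
  have "N x = N (\<Sum>i\<in>UNIV. x $ i *\<^sub>R axis i 1)"
    by (simp add: basis_expansion flip: scalar_mult_eq_scaleR)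
  also have "\<dots> \<le> (\<Sum>i\<in>UNIV. \<bar>x $ i\<bar> * N (axis i 1))"
    using N_sum [of "\<lambda>i. x $ i *\<^sub>R axis i 1" UNIV] by simp
  also have "\<dots> \<le> (\<Sum>i\<in>UNIV. N (axis i 1)) * norm x"
    unfolding sum_distrib_right
    by (intro sum_mono) (simp add: mult.commute mult_right_mono component_le_norm_cart)
  finally show "N x \<le> (\<Sum>i\<in>UNIV. N (axis i 1)) * norm x" .
qed (simp add: sum_nonneg)

lemma continuous_on_N: "continuous_on UNIV N"
proof -
  obtain B where "B \<ge> 0" and B: "\<And>x. N x \<le> B * norm x"
    using N_le_norm by blast
  have "dist (N x) (N y) \<le> B * dist x y" for x y
    using N_triangle_diff [of x y] N_triangle_diff [of y x] B [of "x - y"] B [of "y - x"]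
    by (simp add: dist_real_def dist_norm norm_minus_commute abs_le_iff)
  with \<open>B \<ge> 0\<close> have "B-lipschitz_on UNIV N"
    by (intro lipschitz_onI)
  then show ?thesis
    by (rule lipschitz_on_continuous_on)
qed

lemma norm_le_N: "\<exists>m>0. \<forall>x. m * norm x \<le> N x"
proof -
  have "continuous_on (sphere 0 1) N"
    using continuous_on_N continuous_on_subset by blast
  then obtain z where z: "z \<in> sphere (0::real^'n) 1" and min: "\<forall>y\<in>sphere 0 1. N z \<le> N y"
    using continuous_attains_inf [of "sphere 0 1" N] by auto
  have "N z * norm x \<le> N x" for x
  proof (cases "x = 0")
    case False
    then have "(1 / norm x) *\<^sub>R x \<in> sphere 0 1"
      by simp
    then have "N z \<le> N ((1 / norm x) *\<^sub>R x)"
      using min by blast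
    with False show ?thesis
      by (simp add: field_simps)
  qed simp
  moreover have "0 < N z"
    using z by (intro N_pos) auto
  ultimately show ?thesis
    by blast
qed

lemma N_mult_vec_bounded: "\<exists>C. \<forall>x. N (M *v x) \<le> C * N x"
proof -
  obtain B where B: "\<And>x. N x \<le> B * norm x" "B \<ge> 0"
    using N_le_norm by blast
  obtain m where m: "\<And>x. m * norm x \<le> N x" "m > 0"
    using norm_le_N by blast
  obtain K where K: "\<And>x. norm (M *v x) \<le> norm x * K" "K > 0"
    using bounded_linear.pos_bounded [OF matrix_vector_mul_bounded_linear] by blast
  have "N (M *v x) \<le> (B * K / m) * N x" for x
  proof -
    have "N (M *v x) \<le> B * (norm x * K)"
      using B K by (meson mult_left_mono order_trans)
    also have "\<dots> = (B * K) * norm x"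
      by simp
    also have "\<dots> \<le> (B * K) * (N x / m)"
      using B K m by (intro mult_left_mono) (simp_all add: pos_le_divide_eq mult.commute)
    finally show ?thesis
      by simp
  qed
  then show ?thesis
    by blast
qed

lemma ex_N_eq_1: "\<exists>x. N x = 1"
proof -
  obtain x :: "real^'n" where "x \<noteq> 0"
    using zero_neq_one by blast
  then show ?thesis
    by (intro exI [of _ "(1 / N x) *\<^sub>R x"]) (simp add: N_pos [THEN less_imp_neq, symmetric])
qed

lemma bdd_above_induced_norm: "bdd_above {N (M *v x) | x. N x = 1}"
proof -
  obtain C where "\<And>x. N (M *v x) \<le> C * N x"
    using N_mult_vec_bounded by blast
  then show ?thesis
    unfolding bdd_above_def by (intro exI [of _ C]) (auto, metis mult.right_neutral)
qed

lemma N_mult_vec_le_induced_norm: "N (M *v x) \<le> induced_norm N M * N x"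
proof (cases "x = 0")
  case False
  then have "N (M *v ((1 / N x) *\<^sub>R x)) \<le> induced_norm N M"
    unfolding induced_norm_def
    by (intro cSup_upper [OF _ bdd_above_induced_norm]) (auto simp: N_pos [THEN less_imp_neq, symmetric])
  with False show ?thesis
    by (simp add: matrix_vector_mult_scaleR N_pos field_simps)
qed simp

lemma induced_norm_nonneg: "0 \<le> induced_norm N M"
proof -
  obtain x where "N x = 1"
    using ex_N_eq_1 by blast
  then show ?thesis
    using order_trans [OF N_nonneg N_mult_vec_le_induced_norm [of M x]] by simp
qed

lemma induced_norm_le: "(\<And>x. N (M *v x) \<le> c * N x) \<Longrightarrow> induced_norm N M \<le> c"
  unfolding induced_norm_def using ex_N_eq_1 by (intro cSup_least) (auto, metis mult.right_neutral)

lemma induced_norm_add: "induced_norm N (A + B) \<le> induced_norm N A + induced_norm N B"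
proof (rule induced_norm_le)
  fix x
  have "N ((A + B) *v x) \<le> N (A *v x) + N (B *v x)"
    by (simp add: matrix_vector_mult_add_rdistrib N_triangle)
  also have "\<dots> \<le> (induced_norm N A + induced_norm N B) * N x"
    unfolding distrib_right by (intro add_mono N_mult_vec_le_induced_norm)
  finally show "N ((A + B) *v x) \<le> (induced_norm N A + induced_norm N B) * N x" .
qed

lemma induced_norm_scaleR_le: "induced_norm N (c *\<^sub>R A) \<le> \<bar>c\<bar> * induced_norm N A"
proof (rule induced_norm_le)
  fix x
  have "N ((c *\<^sub>R A) *v x) = \<bar>c\<bar> * N (A *v x)"
    by (simp flip: scaleR_matrix_vector_assoc)
  also have "\<dots> \<le> \<bar>c\<bar> * induced_norm N A * N x"
    using N_mult_vec_le_induced_norm by (simp add: mult_left_mono mult.assoc)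
  finally show "N ((c *\<^sub>R A) *v x) \<le> \<bar>c\<bar> * induced_norm N A * N x" .
qed

lemma induced_norm_scaleR: "induced_norm N (c *\<^sub>R A) = \<bar>c\<bar> * induced_norm N A"
proof (cases "c = 0")
  case False
  have "induced_norm N A = induced_norm N (inverse c *\<^sub>R (c *\<^sub>R A))"
    using False by simp
  also have "\<dots> \<le> \<bar>inverse c\<bar> * induced_norm N (c *\<^sub>R A)"
    by (rule induced_norm_scaleR_le)
  finally have "\<bar>c\<bar> * induced_norm N A \<le> induced_norm N (c *\<^sub>R A)"
    using False by (simp add: field_simps)
  with induced_norm_scaleR_le show ?thesis
    by (simp add: order_antisym)
next
  case True
  then show ?thesis
    using induced_norm_scaleR_le [of 0 A] induced_norm_nonneg [of 0] by simp
qed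

lemma induced_norm_id [simp]: "induced_norm N (mat 1) = 1"
proof (rule order_antisym)
  show "induced_norm N (mat 1) \<le> 1"
    by (rule induced_norm_le) simp
  obtain x where "N x = 1"
    using ex_N_eq_1 by blast
  then show "1 \<le> induced_norm N (mat 1)"
    using N_mult_vec_le_induced_norm [of "mat 1" x] by simp
qed

end

section \<open>The matrix measure\<close>

definition measure_quotient :: "(real^'n \<Rightarrow> real) \<Rightarrow> real^'n^'n \<Rightarrow> real \<Rightarrow> real" where
  "measure_quotient N A e = (induced_norm N (mat 1 + e *\<^sub>R A) - 1) / e"

lemma matrix_measure_eq_Lim: "matrix_measure N A = Lim (at_right 0) (measure_quotient N A)"
  by (simp add: matrix_measure_def measure_quotient_def [abs_def])

lemma filterlim_times_at_right_0: "0 < t \<Longrightarrow> filterlim (\<lambda>e. t * e) (at_right 0) (at_right (0::real))"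
  by (simp add: filterlim_def filtermap_times_pos_at_right)

definition admissible_measure :: "(real^'n \<Rightarrow> real) \<Rightarrow> bool" where
  "admissible_measure N \<longleftrightarrow> (\<forall>d. (\<forall>i. 0 \<le> d i) \<longrightarrow> matrix_measure N (- diagm d) \<le> 0)"

context vector_norm
begin

lemma measure_quotient_mono:
  assumes "0 < s" "s \<le> t"
  shows "measure_quotient N A s \<le> measure_quotient N A t"
proof -
  have "mat 1 + s *\<^sub>R A = (s / t) *\<^sub>R (mat 1 + t *\<^sub>R A) + (1 - s / t) *\<^sub>R mat 1"
    using assms by (simp add: algebra_simps)
  then have "induced_norm N (mat 1 + s *\<^sub>R A) \<le> (s / t) * induced_norm N (mat 1 + t *\<^sub>R A) + (1 - s / t)"
    using assms induced_norm_add [of "(s / t) *\<^sub>R (mat 1 + t *\<^sub>R A)" "(1 - s / t) *\<^sub>R mat 1"]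
    by (simp add: induced_norm_scaleR)
  then have "induced_norm N (mat 1 + s *\<^sub>R A) - 1 \<le> (s / t) * (induced_norm N (mat 1 + t *\<^sub>R A) - 1)"
    by (simp add: algebra_simps)
  with assms show ?thesis
    unfolding measure_quotient_def by (simp add: field_simps)
qed

lemma measure_quotient_lower_bound:
  assumes "0 < e"
  shows "- induced_norm N (- A) \<le> measure_quotient N A e"
proof -
  have "1 \<le> induced_norm N (mat 1 + e *\<^sub>R A) + induced_norm N (e *\<^sub>R (- A))"
    using induced_norm_add [of "mat 1 + e *\<^sub>R A" "e *\<^sub>R (- A)"] by simp
  with assms induced_norm_scaleR [of e "- A"] show ?thesis
    unfolding measure_quotient_def by (simp add: field_simps)
qed

lemma tendsto_measure_quotient:
  "(measure_quotient N A \<longlongrightarrow> matrix_measure N A) (at_right 0)"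
proof -
  have "(measure_quotient N A \<longlongrightarrow> Inf (measure_quotient N A ` {0<..})) (at_right 0)"
    using Lim_right_bound [of UNIV 0 "measure_quotient N A" "- induced_norm N (- A)"]
    by (simp add: measure_quotient_mono measure_quotient_lower_bound)
  moreover from this have "matrix_measure N A = Inf (measure_quotient N A ` {0<..})"
    unfolding matrix_measure_eq_Lim by (rule tendsto_Lim [rotated]) simp
  ultimately show ?thesis
    by simp
qed

lemma matrix_measure_add_scaled_id: "matrix_measure N (A + c *\<^sub>R mat 1) = matrix_measure N A + c"
proof -
  let ?h = "\<lambda>e. e / (1 + e * c)"
  have pos: "\<forall>\<^sub>F e in at_right 0. 0 < 1 + e * c"
    by (rule order_tendstoD) (auto intro!: tendsto_eq_intros)
  have "filterlim ?h (at_right 0) (at_right 0)"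
  proof (rule tendsto_imp_filterlim_at_right)
    show "(?h \<longlongrightarrow> 0) (at_right 0)"
      by (auto intro!: tendsto_eq_intros)
    show "\<forall>\<^sub>F e in at_right 0. 0 < ?h e"
      using pos eventually_at_right_less by eventually_elim simp
  qed
  then have "((\<lambda>e. measure_quotient N A (?h e) + c) \<longlongrightarrow> matrix_measure N A + c) (at_right 0)"
    by (intro tendsto_add filterlim_compose [OF tendsto_measure_quotient]) auto
  moreover have "\<forall>\<^sub>F e in at_right 0. measure_quotient N A (?h e) + c = measure_quotient N (A + c *\<^sub>R mat 1) e"
    using pos eventually_at_right_less
  proof eventually_elim
    case (elim e)
    have "(1 + e * c) * ?h e = e"
      using elim by simp
    then have "(1 + e * c) *\<^sub>R (mat 1 + ?h e *\<^sub>R A) = (1 + e * c) *\<^sub>R mat 1 + e *\<^sub>R A"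
      by (simp add: scaleR_add_right)
    also have "\<dots> = mat 1 + e *\<^sub>R (A + c *\<^sub>R mat 1)"
      by (simp add: algebra_simps)
    finally have "mat 1 + e *\<^sub>R (A + c *\<^sub>R mat 1) = (1 + e * c) *\<^sub>R (mat 1 + ?h e *\<^sub>R A)" ..
    then have "measure_quotient N (A + c *\<^sub>R mat 1) e
        = ((1 + e * c) * induced_norm N (mat 1 + ?h e *\<^sub>R A) - 1) / e"
      using elim unfolding measure_quotient_def by (simp add: induced_norm_scaleR)
    also have "\<dots> = measure_quotient N A (?h e) + c"
      using elim unfolding measure_quotient_def by (simp add: field_simps)
    finally show ?case
      by simp
  qed
  ultimately have "(measure_quotient N (A + c *\<^sub>R mat 1) \<longlongrightarrow> matrix_measure N A + c) (at_right 0)"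
    by (rule tendsto_cong [THEN iffD1, rotated])
  then show ?thesis
    using tendsto_measure_quotient by (rule tendsto_unique [OF trivial_limit_at_right_real, rotated])
qed

lemma matrix_measure_scaleR:
  assumes "0 < t"
  shows "matrix_measure N (t *\<^sub>R A) = t * matrix_measure N A"
proof -
  have "measure_quotient N (t *\<^sub>R A) = (\<lambda>e. t * measure_quotient N A (t * e))"
    using assms by (auto simp: fun_eq_iff measure_quotient_def mult.commute)
  moreover have "((\<lambda>e. t * measure_quotient N A (t * e)) \<longlongrightarrow> t * matrix_measure N A) (at_right 0)"
    using assms by (intro tendsto_mult_left filterlim_compose [OF tendsto_measure_quotient]
        filterlim_times_at_right_0)
  ultimately show ?thesis
    using tendsto_measure_quotient by (metis tendsto_unique trivial_limit_at_right_real)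
qed

lemma matrix_measure_add: "matrix_measure N (A + B) \<le> matrix_measure N A + matrix_measure N B"
proof (rule tendsto_le [OF trivial_limit_at_right_real])
  show "((\<lambda>e. measure_quotient N A (2 * e) + measure_quotient N B (2 * e))
      \<longlongrightarrow> matrix_measure N A + matrix_measure N B) (at_right 0)"
    by (intro tendsto_add filterlim_compose [OF tendsto_measure_quotient] filterlim_times_at_right_0) simp_all
  show "(measure_quotient N (A + B) \<longlongrightarrow> matrix_measure N (A + B)) (at_right 0)"
    by (rule tendsto_measure_quotient)
  show "\<forall>\<^sub>F e in at_right 0.
      measure_quotient N (A + B) e \<le> measure_quotient N A (2 * e) + measure_quotient N B (2 * e)"
    using eventually_at_right_less
  proof eventually_elim
    case (elim e)
    have "mat 1 + e *\<^sub>R (A + B) = (1 / 2) *\<^sub>R (mat 1 + (2 * e) *\<^sub>R A) + (1 / 2) *\<^sub>R (mat 1 + (2 * e) *\<^sub>R B)"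
      by (simp add: algebra_simps flip: scaleR_2)
    then have "induced_norm N (mat 1 + e *\<^sub>R (A + B)) - 1
        \<le> ((induced_norm N (mat 1 + (2 * e) *\<^sub>R A) - 1) + (induced_norm N (mat 1 + (2 * e) *\<^sub>R B) - 1)) / 2"
      using induced_norm_add [of "(1 / 2) *\<^sub>R (mat 1 + (2 * e) *\<^sub>R A)" "(1 / 2) *\<^sub>R (mat 1 + (2 * e) *\<^sub>R B)"]
      by (simp add: induced_norm_scaleR)
    then have "measure_quotient N (A + B) e
        \<le> ((induced_norm N (mat 1 + (2 * e) *\<^sub>R A) - 1) + (induced_norm N (mat 1 + (2 * e) *\<^sub>R B) - 1)) / 2 / e"
      unfolding measure_quotient_def using elim by (intro divide_right_mono) auto
    also have "\<dots> = measure_quotient N A (2 * e) + measure_quotient N B (2 * e)"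
      unfolding measure_quotient_def using elim by (simp add: field_simps)
    finally show ?case .
  qed
qed

end

section \<open>Orthant-monotonic norms\<close>

lemma orthant_monotonic_iff_diagm:
  fixes N :: "real^'n \<Rightarrow> real"
  shows "orthant_monotonic N \<longleftrightarrow>
     (\<forall>g x. (\<forall>i. 0 \<le> g i \<and> g i \<le> 1) \<longrightarrow> N (diagm g *v x) \<le> N x)"
proof
  assume om: "orthant_monotonic N"
  show "\<forall>g x. (\<forall>i. 0 \<le> g i \<and> g i \<le> 1) \<longrightarrow> N (diagm g *v x) \<le> N x"
  proof (intro allI impI)
    fix g :: "'n \<Rightarrow> real" and x :: "real^'n"
    assume g: "\<forall>i. 0 \<le> g i \<and> g i \<le> 1"
    have "0 \<le> (g i * x $ i) * x $ i \<and> \<bar>g i * x $ i\<bar> \<le> \<bar>x $ i\<bar>" for i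
      using g mult_left_le_one_le[of "\<bar>x $ i\<bar>" "g i"]
      by (auto simp: abs_mult mult.assoc)
    then show "N (diagm g *v x) \<le> N x"
      using om unfolding orthant_monotonic_def diagm_mult_vec by auto
  qed
next
  assume contr: "\<forall>g x. (\<forall>i. 0 \<le> g i \<and> g i \<le> 1) \<longrightarrow> N (diagm g *v x) \<le> N x"
  show "orthant_monotonic N"
    unfolding orthant_monotonic_def
  proof (intro allI impI)
    fix x y :: "real^'n"
    assume xy: "\<forall>i. 0 \<le> x $ i * y $ i \<and> \<bar>x $ i\<bar> \<le> \<bar>y $ i\<bar>"
    define g where "g i = (if y $ i = 0 then 0 else x $ i / y $ i)" for i
    have "0 \<le> g i \<and> g i \<le> 1" for i
    proof (cases "y $ i = 0")
      case False
      have "0 \<le> x $ i / y $ i"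
        using xy by (simp add: zero_le_divide_iff zero_le_mult_iff)
      moreover have "\<bar>x $ i / y $ i\<bar> \<le> 1"
        using xy False by (simp add: divide_le_eq_1)
      then have "x $ i / y $ i \<le> 1"
        by (rule abs_le_D1)
      ultimately show ?thesis
        using False by (simp add: g_def)
    qed (simp add: g_def)
    moreover have "diagm g *v y = x"
      using xy by (auto simp: vec_eq_iff g_def diagm_mult_vec) (metis abs_le_zero_iff abs_zero)
    ultimately show "N x \<le> N y"
      using contr by metis
  qed
qed

context vector_norm
begin

lemma abs_le_induced_norm_diagm: "\<bar>g k\<bar> \<le> induced_norm N (diagm g)"
proof -
  have "diagm g *v axis k 1 = g k *\<^sub>R axis k 1"
    by (simp add: diagm_mult_vec vec_eq_iff axis_def)
  then have "\<bar>g k\<bar> * N (axis k 1) \<le> induced_norm N (diagm g) * N (axis k 1)"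
    using N_mult_vec_le_induced_norm [of "diagm g" "axis k 1"] by simp
  moreover have "0 < N (axis k 1)"
    by (simp add: N_pos)
  ultimately show ?thesis
    by simp
qed

lemma induced_norm_diagm_le:
  assumes "orthant_monotonic N" and g: "\<And>i. 0 \<le> g i \<and> g i \<le> c"
  shows "induced_norm N (diagm g) \<le> c"
proof (cases "c = 0")
  case True
  with g have "diagm g = 0"
    by (simp add: vec_eq_iff diagm_def order_antisym)
  with True show ?thesis
    using induced_norm_scaleR [of 0 0] by simp
next
  case False
  moreover have "0 \<le> c"
    using g [of undefined] by linarith
  ultimately have "0 < c"
    by simp
  show ?thesis
  proof (rule induced_norm_le)
    fix x
    have "diagm g *v x = c *\<^sub>R (diagm (\<lambda>i. g i / c) *v x)"
      using \<open>0 < c\<close> by (simp add: diagm_mult_vec vec_eq_iff)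
    moreover have "N (diagm (\<lambda>i. g i / c) *v x) \<le> N x"
      using assms \<open>0 < c\<close> unfolding orthant_monotonic_iff_diagm by simp
    ultimately show "N (diagm g *v x) \<le> c * N x"
      using \<open>0 < c\<close> by (simp add: mult_left_mono)
  qed
qed

lemma induced_norm_diagm:
  assumes "orthant_monotonic N" and "\<And>i. 0 \<le> g i"
  shows "induced_norm N (diagm g) = Max (range g)"
proof (rule order_antisym)
  show "induced_norm N (diagm g) \<le> Max (range g)"
    using assms by (intro induced_norm_diagm_le) auto
  have "Max (range g) \<in> range g"
    by (rule Max_in) auto
  then obtain k where "Max (range g) = g k"
    by blast
  then show "Max (range g) \<le> induced_norm N (diagm g)"
    using abs_le_induced_norm_diagm [of g k] by simp
qed

lemma matrix_measure_diagm:
  assumes "orthant_monotonic N" and d: "\<And>i. 0 \<le> d i"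
  shows "matrix_measure N (diagm d) = Max (range d)"
proof -
  have "measure_quotient N (diagm d) e = Max (range d)" if "0 < e" for e
  proof -
    have "Max (range (\<lambda>i. 1 + e * d i)) = 1 + e * Max (range d)"
      using \<open>0 < e\<close> mono_Max_commute [of "\<lambda>y. 1 + e * y" "range d"]
      by (simp add: mono_def image_image)
    moreover have "induced_norm N (diagm (\<lambda>i. 1 + e * d i)) = Max (range (\<lambda>i. 1 + e * d i))"
      using assms \<open>0 < e\<close> by (intro induced_norm_diagm) simp_all
    ultimately show ?thesis
      using \<open>0 < e\<close> by (simp add: measure_quotient_def mat_1_plus_scaleR_diagm)
  qed
  then have "(measure_quotient N (diagm d) \<longlongrightarrow> Max (range d)) (at_right 0)"
    by (intro tendsto_eventually) (auto intro: eventually_at_right_less [THEN eventually_mono])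
  with tendsto_measure_quotient show ?thesis
    by (rule tendsto_unique [OF trivial_limit_at_right_real])
qed

lemma admissible_if_matrix_measure_diagm:
  assumes "\<forall>d. (\<forall>i. 0 \<le> d i) \<longrightarrow> matrix_measure N (diagm d) = Max (range d)"
  shows "admissible_measure N"
  unfolding admissible_measure_def
proof (intro allI impI)
  fix d :: "'n \<Rightarrow> real"
  assume d: "\<forall>i. 0 \<le> d i"
  define M where "M = Max (range d)"
  have "d i \<le> M" for i
    by (simp add: M_def)
  have "- diagm d = diagm (\<lambda>i. M - d i) + (- M) *\<^sub>R mat 1"
    by (simp add: mat_1_eq_diagm scaleR_diagm diagm_add uminus_diagm)
  then have "matrix_measure N (- diagm d) = matrix_measure N (diagm (\<lambda>i. M - d i)) - M"
    by (simp only: matrix_measure_add_scaled_id)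
  also have "\<dots> = Max (range (\<lambda>i. M - d i)) - M"
    using assms \<open>\<And>i. d i \<le> M\<close> by simp
  also have "\<dots> \<le> 0"
    using d by simp
  finally show "matrix_measure N (- diagm d) \<le> 0" .
qed

lemma stable_shift_if_admissible:
  assumes "admissible_measure N" and "\<forall>i. 0 \<le> d i"
  shows "matrix_measure N (- mat 1 - diagm d) < 0"
proof -
  have "- mat 1 - diagm d = - diagm d + (- 1) *\<^sub>R mat 1"
    by simp
  then have "matrix_measure N (- mat 1 - diagm d) = matrix_measure N (- diagm d) - 1"
    by (simp only: matrix_measure_add_scaled_id)
  moreover have "matrix_measure N (- diagm d) \<le> 0"
    using assms unfolding admissible_measure_def by blast
  ultimately show ?thesis
    by simp
qed

lemma admissible_if_stable_shift:
  assumes A: "\<forall>d. (\<forall>i. 0 \<le> d i) \<longrightarrow> matrix_measure N (A - diagm d) < 0"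
  shows "admissible_measure N"
  unfolding admissible_measure_def
proof (intro allI impI)
  fix d :: "'n \<Rightarrow> real"
  assume d: "\<forall>i. 0 \<le> d i"
  have bound: "t * matrix_measure N (- diagm d) < matrix_measure N (- A)" if "0 < t" for t
  proof -
    have "t * matrix_measure N (- diagm d) = matrix_measure N ((A - diagm (\<lambda>i. t * d i)) + - A)"
      using \<open>0 < t\<close> by (simp add: scaleR_diagm uminus_diagm matrix_measure_scaleR [symmetric])
    also have "\<dots> \<le> matrix_measure N (A - diagm (\<lambda>i. t * d i)) + matrix_measure N (- A)"
      by (rule matrix_measure_add)
    also have "\<dots> < matrix_measure N (- A)"
      using A d \<open>0 < t\<close> by simp
    finally show ?thesis .
  qed
  show "matrix_measure N (- diagm d) \<le> 0"
  proof (rule ccontr)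
    assume "\<not> matrix_measure N (- diagm d) \<le> 0"
    then have "0 < matrix_measure N (- diagm d)"
      by simp
    with bound [of "(\<bar>matrix_measure N (- A)\<bar> + 1) / matrix_measure N (- diagm d)"]
    show False
      by simp
  qed
qed

text \<open>
  With p = s(1 - e), the matrix I - e E_k maps y = C_s x to C_p x, and y is a convex combination
  of C_p x and x. Letting c decrease to 0 afterwards gives N y \<le> N x.
\<close>

lemma N_coord_scaling_estimate:
  fixes x :: "real^'n"
  assumes mu: "matrix_measure N (- diagm (\<lambda>i. of_bool (i = k))) < c" and s: "0 < s" "s < 1"
  defines "y \<equiv> coord_scaling k s *v x"
  shows "s * N y \<le> (1 - s) * c * N y + s * N x"
proof -
  have "\<forall>\<^sub>F e in at_right (0::real). e < 1"
    by (rule eventually_at_rightI [of 0 1]) auto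
  then have "\<forall>\<^sub>F e in at_right 0.
      0 < e \<and> e < 1 \<and> measure_quotient N (- diagm (\<lambda>i. of_bool (i = k))) e < c"
    using eventually_at_right_less order_tendstoD(2) [OF tendsto_measure_quotient mu]
    by eventually_elim auto
  then obtain e where e: "0 < e" "e < 1"
    and "measure_quotient N (- diagm (\<lambda>i. of_bool (i = k))) e < c"
    using eventually_happens' [OF trivial_limit_at_right_real] by blast
  then have K: "induced_norm N (coord_scaling k (1 - e)) \<le> 1 + c * e"
    unfolding measure_quotient_def mat_1_minus_scaleR_coord_diagm by (simp add: field_simps)
  define p where "p = s * (1 - e)"
  have "N (coord_scaling k p *v x) = N (coord_scaling k (1 - e) *v y)"
    by (simp add: y_def p_def coord_scaling_mult_vec_mult_vec mult.commute)
  also have "\<dots> \<le> (1 + c * e) * N y"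
    using K N_mult_vec_le_induced_norm [of "coord_scaling k (1 - e)" y]
    by (meson N_nonneg mult_right_mono order_trans)
  finally have contract: "N (coord_scaling k p *v x) \<le> (1 + c * e) * N y" .
  have "(1 - p) *\<^sub>R y = (1 - s) *\<^sub>R (coord_scaling k p *v x) + (s * e) *\<^sub>R x"
    using coord_scaling_convex [of p k s x] by (simp add: y_def p_def algebra_simps)
  moreover have "p \<le> s"
    unfolding p_def using s e by (intro mult_left_le) auto
  then have "0 < 1 - p"
    using s by simp
  ultimately have "(1 - p) * N y = N ((1 - s) *\<^sub>R (coord_scaling k p *v x) + (s * e) *\<^sub>R x)"
    by (metis N_scaleR abs_of_pos)
  also have "\<dots> \<le> (1 - s) * N (coord_scaling k p *v x) + (s * e) * N x"
    using N_triangle [of "(1 - s) *\<^sub>R (coord_scaling k p *v x)" "(s * e) *\<^sub>R x"] s e by simp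
  also have "\<dots> \<le> (1 - s) * ((1 + c * e) * N y) + (s * e) * N x"
    using contract s by (simp add: mult_left_mono)
  finally have "e * (s * N y) \<le> e * ((1 - s) * c * N y + s * N x)"
    by (simp add: p_def algebra_simps)
  with \<open>0 < e\<close> show ?thesis
    by simp
qed

lemma N_coord_scaling_le:
  assumes mu: "matrix_measure N (- diagm (\<lambda>i. of_bool (i = k))) \<le> 0" and s: "0 \<le> s" "s \<le> 1"
  shows "N (coord_scaling k s *v x) \<le> N x"
proof -
  have interior: "N (coord_scaling k t *v x) \<le> N x" if t: "0 < t" "t < 1" for t
  proof -
    have "t * N (coord_scaling k t *v x) \<le> t * N x"
    proof (rule tendsto_le [OF trivial_limit_at_right_real])
      show "((\<lambda>c. (1 - t) * c * N (coord_scaling k t *v x) + t * N x) \<longlongrightarrow> t * N x) (at_right 0)"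
        by (auto intro!: tendsto_eq_intros)
      show "\<forall>\<^sub>F c in at_right 0. t * N (coord_scaling k t *v x)
          \<le> (1 - t) * c * N (coord_scaling k t *v x) + t * N x"
        using eventually_at_right_less
        by eventually_elim (use mu t in \<open>auto intro: N_coord_scaling_estimate\<close>)
    qed simp
    with t show ?thesis
      by simp
  qed
  consider "s = 0" | "0 < s \<and> s < 1" | "s = 1"
    using s by linarith
  then show ?thesis
  proof cases
    case 1
    have "((\<lambda>t. N (coord_scaling k t *v x)) \<longlongrightarrow> N (coord_scaling k 0 *v x)) (at_right 0)"
      unfolding coord_scaling_mult_vec
      by (rule continuous_on_tendsto_compose [OF continuous_on_N]) (auto intro!: tendsto_eq_intros)
    moreover have "\<forall>\<^sub>F t in at_right 0. N (coord_scaling k t *v x) \<le> N x"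
      using interior by (intro eventually_at_rightI [of 0 1]) auto
    ultimately show ?thesis
      using 1 by (auto intro: tendsto_upperbound)
  qed (use interior in auto)
qed

lemma N_diagm_le_if_admissible:
  assumes "admissible_measure N" and g: "\<And>i. 0 \<le> g i \<and> g i \<le> 1"
  shows "N (diagm g *v x) \<le> N x"
proof -
  have "N (diagm (\<lambda>i. if i \<in> S then g i else 1) *v x) \<le> N x" if "finite S" for S
    using that
  proof (induction S rule: finite_induct)
    case (insert k S)
    have "matrix_measure N (- diagm (\<lambda>i. of_bool (i = k))) \<le> 0"
      using assms(1) unfolding admissible_measure_def by simp
    have "N (diagm (\<lambda>i. if i \<in> insert k S then g i else 1) *v x)
        = N (coord_scaling k (g k) *v (diagm (\<lambda>i. if i \<in> S then g i else 1) *v x))"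
      using \<open>k \<notin> S\<close> by (intro arg_cong [where f = N]) (auto simp: coord_scaling_def diagm_mult_vec vec_eq_iff)
    also have "\<dots> \<le> N (diagm (\<lambda>i. if i \<in> S then g i else 1) *v x)"
      using N_coord_scaling_le \<open>matrix_measure N _ \<le> 0\<close> g by blast
    also have "\<dots> \<le> N x"
      by (rule insert.IH)
    finally show ?case .
  qed (simp add: mat_1_eq_diagm [symmetric])
  from this [of UNIV] show ?thesis
    by simp
qed

lemma orthant_monotonic_if_admissible: "admissible_measure N \<Longrightarrow> orthant_monotonic N"
  unfolding orthant_monotonic_iff_diagm using N_diagm_le_if_admissible by blast

end

theorem theorem1:
  fixes N :: "real^'n \<Rightarrow> real"
  assumes "is_vnorm N"
  defines "P1 \<equiv> orthant_monotonic N"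
      and "P2 \<equiv> (\<forall>d. (\<forall>i. d i \<ge> 0) \<longrightarrow> matrix_measure N (- diagm d) \<le> 0)"
      and "P3 \<equiv> (\<forall>d. (\<forall>i. d i \<ge> 0) \<longrightarrow> matrix_measure N (diagm d) = Max (range d))"
      and "P4 \<equiv> (\<exists>A. \<forall>d. (\<forall>i. d i \<ge> 0) \<longrightarrow> matrix_measure N (A - diagm d) < 0)"
  shows "(P1 \<longleftrightarrow> P2) \<and> (P1 \<longleftrightarrow> P3) \<and> (P1 \<longleftrightarrow> P4)"
proof -
  interpret vector_norm N
    by unfold_locales (rule assms(1))
  have P2: "P2 \<longleftrightarrow> admissible_measure N"
    by (simp add: P2_def admissible_measure_def)
  have "P1 \<Longrightarrow> P3"
    unfolding P1_def P3_def by (simp add: matrix_measure_diagm)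
  moreover have "P3 \<Longrightarrow> P2"
    unfolding P2 P3_def by (rule admissible_if_matrix_measure_diagm)
  moreover have "P2 \<Longrightarrow> P1"
    unfolding P2 P1_def by (rule orthant_monotonic_if_admissible)
  moreover have "P2 \<Longrightarrow> P4"
    unfolding P2 P4_def using stable_shift_if_admissible by auto
  moreover have "P4 \<Longrightarrow> P2"
    unfolding P2 P4_def using admissible_if_stable_shift by (elim exE)
  ultimately show ?thesis
    by blast
qed

end
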